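(* Let $m\ge 7$ and $r$ be integers with $\lceil\frac{m}{2}\rceil<r<m-2$, and let $\mathcal{B}$ be the primitive, narrow-sense BCH code of length $2^m-1$ and designed distance $2^{m-r}-1$. Then \[\mathcal{R}(r,m)^{*\perp}\subseteq\mathcal{R}(r,m)^*\subset\mathcal{B}.\]
   Context: Let $n=2^m-1$. For a nonnegative integer $s$, $C_{s,n}=\{s2^i\bmod n : i\in\mathbb{N}\}$, $S_n$ is the set of smallest elements of the distinct cyclotomic cosets modulo $n$, $\alpha$ is a primitive $n$th root of unity in $\mathbb{F}_{2^m}$, and $M_s(x)=\prod_{i\in C_{s,n}}(x-\alpha^i)$. $\operatorname{w}_2(s)$ is the number of ones in the binary expansion of $s$. Cyclic codes of length $n$ are ideals of $\mathbb{F}_2[x]/(x^n-1)$ given by generator polynomials. The punctured Reed--Muller code $\mathcal{R}(r,m)^*$ ($r<m$) is the cyclic code of length $n$ with generator polynomial $\prod_{s\in S_n,\,1\le\operatorname{w}_2(s)\le m-r-1}M_s(x)$, and $\mathcal{R}(r,m)^{*\perp}$ is its dual. The primitive, narrow-sense BCH code of length $n$ and designed distance $d$ is the cyclic code with generator polynomial $\prod_{i\in\bigcup_{j=0}^{d-2}C_{1+j,n}}(x-\alpha^i)$. *)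

theory Defs
  imports Complex_Main "HOL-Library.Z2" "HOL-Computational_Algebra.Polynomial"
begin

definition cyc_coset :: "nat \<Rightarrow> nat \<Rightarrow> nat set" where
  "cyc_coset n s = {(s * 2 ^ i) mod n | i. True}"

definition coset_leaders :: "nat \<Rightarrow> nat set" where
  "coset_leaders n = {s. s < n \<and> (\<forall>t \<in> cyc_coset n s. s \<le> t)}"

fun w2 :: "nat \<Rightarrow> nat" where
  "w2 s = (if s = 0 then 0 else s mod 2 + w2 (s div 2))"

definition prim_root :: "nat \<Rightarrow> 'a::field \<Rightarrow> bool" where
  "prim_root n \<alpha> \<longleftrightarrow> \<alpha> ^ n = 1 \<and> (\<forall>k. 0 < k \<and> k < n \<longrightarrow> \<alpha> ^ k \<noteq> 1)"

definition min_poly :: "nat \<Rightarrow> 'a::field \<Rightarrow> nat \<Rightarrow> 'a poly" where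
  "min_poly n \<alpha> s = (\<Prod>i \<in> cyc_coset n s. [:- (\<alpha> ^ i), 1:])"

text \<open>Binary cyclic code of length n with generator polynomial g (g in F_2[x], given
  via its roots in an extension field 'a): the ideal (g) of F_2[x]/(x^n-1), with
  elements represented by their unique representatives of degree < n.\<close>
definition cyclic_code :: "nat \<Rightarrow> 'a::field poly \<Rightarrow> bit poly set" where
  "cyclic_code n g = {c. degree c < n \<and> g dvd map_poly of_bit c}"

definition dual_code :: "nat \<Rightarrow> bit poly set \<Rightarrow> bit poly set" where
  "dual_code n C = {c. degree c < n \<and> (\<forall>d \<in> C. (\<Sum>i<n. coeff c i * coeff d i) = 0)}"

definition punct_RM :: "nat \<Rightarrow> nat \<Rightarrow> 'a::field \<Rightarrow> bit poly set" where
  "punct_RM r m \<alpha> = cyclic_code (2^m - 1)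
     (\<Prod>s \<in> {s \<in> coset_leaders (2^m - 1). 1 \<le> w2 s \<and> w2 s \<le> m - r - 1}.
        min_poly (2^m - 1) \<alpha> s)"

definition bch_code :: "nat \<Rightarrow> nat \<Rightarrow> 'a::field \<Rightarrow> bit poly set" where
  "bch_code n d \<alpha> = cyclic_code n
     (\<Prod>i \<in> (\<Union>j \<in> {0..d-2}. cyc_coset n (1 + j)). [:- (\<alpha> ^ i), 1:])"

end

theory Submission
  imports Defs "HOL-Number_Theory.Cong"
begin

text \<open>
  A binary cyclic code of length \<open>n = 2^m - 1\<close> is described by its defining set \<open>Z\<close>: the exponents
  \<open>i\<close> such that \<open>\<alpha>^i\<close> is a zero of every codeword; shrinking \<open>Z\<close> enlarges the code.
  For \<open>R(r,m)^*\<close> the defining set consists of the nonzero exponents of binary weight at most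
  \<open>m - r - 1\<close>; for the BCH code it is the union of the cyclotomic cosets of \<open>1, \<dots>, 2^(m-r) - 2\<close>.
  Doubling modulo \<open>2^m - 1\<close> rotates binary expansions, so the BCH defining set lies inside the
  Reed--Muller one, and the exponent \<open>1 + 2^(m-r)\<close> of weight 2 separates them, since for
  \<open>2(m - r) < m\<close> all its rotations are at least \<open>2^(m-r)\<close>.

  For the dual, a word \<open>c\<close> orthogonal to all cyclic shifts of the binary generator \<open>g\<close> satisfies,
  by Parseval's identity for the Fourier transform over \<open>GF(2^m)\<close>, \<open>c(\<alpha>^v) g(\<alpha>^-v) = 0\<close> for all \<open>v\<close>.
  Negation modulo \<open>2^m - 1\<close> complements the bits and turns weight \<open>w\<close> into \<open>m - w\<close>, which exceeds
  \<open>m - r - 1\<close> when \<open>2r > m\<close>; hence \<open>g(\<alpha>^-v) \<noteq> 0\<close> for \<open>v\<close> in the defining set, and \<open>c\<close> vanishes there.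
\<close>

section \<open>Characteristic two\<close>

lemma two_eq_zero_if_card_pow2:
  assumes "card (UNIV :: 'a::{field,finite} set) = 2 ^ m" "m > 0"
  shows "(2::'a) = 0"
proof -
  have "(\<Sum>y\<in>UNIV. (1::'a) + y) = (\<Sum>y\<in>(\<lambda>y. 1 + y) ` UNIV. y)"
    by (rule sum.reindex[symmetric, simplified]) (auto simp: inj_on_def)
  also have "(\<lambda>y. (1::'a) + y) ` UNIV = UNIV"
    by (auto simp: image_iff)
  finally have "of_nat (card (UNIV::'a set)) = (0::'a)"
    by (simp add: sum.distrib)
  then show ?thesis using assms by simp
qed

lemma uminus_eq_self_char2: "(2::'a::ring_1) = 0 \<Longrightarrow> - x = (x::'a)"
  by (metis add.inverse_unique mult_2 mult_zero_left)

lemma of_nat_odd_char2: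
  assumes "(2::'a::ring_1) = 0" "odd n"
  shows "of_nat n = (1::'a)"
proof -
  obtain k where "n = 2 * k + 1" using assms(2) oddE by blast
  then show ?thesis using assms(1) by simp
qed

lemma power2_add_char2: "(2::'a::comm_ring_1) = 0 \<Longrightarrow> (x + y) ^ 2 = x ^ 2 + (y::'a) ^ 2"
  by (simp add: power2_sum)

lemma of_bit_add_char2: "(2::'a::ring_1) = 0 \<Longrightarrow> (of_bit (a + b) :: 'a) = of_bit a + of_bit b"
  by (cases a; cases b) (simp_all add: one_add_one)

lemma of_bit_mult: "(of_bit (a * b) :: 'a::ring_1) = of_bit a * of_bit b"
  by (cases a; cases b) simp_all

lemma of_bit_diff_char2: "(2::'a::ring_1) = 0 \<Longrightarrow> (of_bit (a - b) :: 'a) = of_bit a - of_bit b"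
  by (cases a; cases b) (simp_all add: uminus_eq_self_char2)

lemma of_bit_sum_char2:
  assumes "(2::'a::ring_1) = 0"
  shows "(of_bit (sum f A) :: 'a) = (\<Sum>x\<in>A. of_bit (f x))"
proof (induction A rule: infinite_finite_induct)
  case (insert x F)
  then show ?case by (simp only: sum.insert[OF insert.hyps] of_bit_add_char2[OF assms] insert.IH)
qed simp_all

lemma map_poly_add_hom:
  assumes "f 0 = 0" "\<And>x y. f (x + y) = f x + f y"
  shows "map_poly f (p + q) = map_poly f p + map_poly f q"
  by (rule poly_eqI) (simp add: coeff_map_poly assms)

lemma map_poly_mult_hom:
  fixes f :: "'a::comm_semiring_0 \<Rightarrow> 'b::comm_semiring_0"
  assumes zero: "f 0 = 0" and add: "\<And>x y. f (x + y) = f x + f y"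
    and mult: "\<And>x y. f (x * y) = f x * f y"
  shows "map_poly f (p * q) = map_poly f p * map_poly f q"
proof (induction p)
  case (pCons a p)
  have "map_poly f (pCons a p * q) = map_poly f (smult a q) + map_poly f (pCons 0 (p * q))"
    unfolding mult_pCons_left by (rule map_poly_add_hom[where f=f, OF zero add])
  also have "\<dots> = smult (f a) (map_poly f q) + pCons 0 (map_poly f p * map_poly f q)"
    by (simp only: map_poly_smult[where f=f, OF zero mult] map_poly_pCons[where f=f, OF zero]
        zero pCons.IH)
  also have "\<dots> = map_poly f (pCons a p) * map_poly f q"
    by (simp only: map_poly_pCons[where f=f, OF zero] mult_pCons_left)
  finally show ?case .
qed simp

lemma map_poly_prod_hom:
  fixes f :: "'a::comm_semiring_1 \<Rightarrow> 'b::comm_semiring_1"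
  assumes "f 0 = 0" "f 1 = 1" "\<And>x y. f (x + y) = f x + f y" "\<And>x y. f (x * y) = f x * f y"
  shows "map_poly f (\<Prod>i\<in>A. p i) = (\<Prod>i\<in>A. map_poly f (p i))"
proof (induction A rule: infinite_finite_induct)
  case (insert x F)
  then show ?case by (simp add: map_poly_mult_hom[where f=f, OF assms(1,3,4)])
qed (simp_all add: assms(2))

lemma map_poly_of_bit_mult_char2:
  "(2::'a::comm_ring_1) = 0 \<Longrightarrow> (map_poly of_bit (p * q) :: 'a poly) = map_poly of_bit p * map_poly of_bit q"
  by (rule map_poly_mult_hom) (simp_all add: of_bit_add_char2 of_bit_mult)

lemma map_poly_of_bit_diff_char2:
  assumes "(2::'a::comm_ring_1) = 0"
  shows "(map_poly of_bit (p - q) :: 'a poly) = map_poly of_bit p - map_poly of_bit q"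
proof (rule poly_eqI)
  fix i
  show "coeff (map_poly of_bit (p - q) :: 'a poly) i = coeff (map_poly of_bit p - map_poly of_bit q) i"
    using of_bit_diff_char2[OF assms, of "coeff p i" "coeff q i"] by (simp add: coeff_map_poly)
qed

lemma degree_map_poly_of_bit: "degree (map_poly of_bit p :: 'a::field poly) = degree p"
  by (rule degree_map_poly) simp

lemma prim_root_nonzero: "prim_root n \<alpha> \<Longrightarrow> n > 0 \<Longrightarrow> \<alpha> \<noteq> 0"
  by (auto simp: prim_root_def power_0_left)

lemma prim_root_power_mod:
  assumes "prim_root n \<alpha>"
  shows "\<alpha> ^ (k mod n) = \<alpha> ^ k"
proof -
  have "k = n * (k div n) + k mod n" by simp
  then have "\<alpha> ^ k = (\<alpha> ^ n) ^ (k div n) * \<alpha> ^ (k mod n)"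
    by (metis power_add power_mult)
  then show ?thesis using assms by (simp add: prim_root_def)
qed

lemma prim_root_power_eq_iff:
  assumes "prim_root n \<alpha>" "i < n" "j < n"
  shows "\<alpha> ^ i = \<alpha> ^ j \<longleftrightarrow> i = j"
proof
  have less: False if "i' < j'" "j' < n" "\<alpha> ^ i' = \<alpha> ^ j'" for i' j'
  proof -
    have "j' = i' + (j' - i')" using that(1) by simp
    then have "\<alpha> ^ i' * \<alpha> ^ (j' - i') = \<alpha> ^ i' * 1"
      using that(3) by (metis mult_1_right power_add)
    then have "\<alpha> ^ (j' - i') = 1" using prim_root_nonzero[OF assms(1)] that by simp
    then show False using assms(1) that by (simp add: prim_root_def)
  qed
  show "\<alpha> ^ i = \<alpha> ^ j \<Longrightarrow> i = j"
    using less[of i j] less[of j i] assms by (cases i j rule: linorder_cases) auto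
qed simp

lemma prim_root_inverse_power:
  assumes "prim_root n \<alpha>" "v \<le> n"
  shows "inverse (\<alpha> ^ v) = \<alpha> ^ ((n - v) mod n)"
proof -
  have "\<alpha> ^ v * \<alpha> ^ (n - v) = 1"
    using assms by (simp add: prim_root_def flip: power_add)
  then show ?thesis by (simp add: inverse_unique prim_root_power_mod[OF assms(1)])
qed

lemma prim_root_power_pow_eq_1:
  assumes "prim_root n \<alpha>"
  shows "(\<alpha> ^ k) ^ n = 1"
proof -
  have "(\<alpha> ^ k) ^ n = (\<alpha> ^ n) ^ k" by (simp only: power_mult[symmetric] mult.commute)
  then show ?thesis using assms by (simp add: prim_root_def)
qed

section \<open>Cyclic codes with a given defining set\<close>

definition roots_poly :: "'a::field \<Rightarrow> nat set \<Rightarrow> 'a poly" where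
  "roots_poly \<alpha> S = (\<Prod>i\<in>S. [:- (\<alpha> ^ i), 1:])"

lemma poly_roots_poly: "poly (roots_poly \<alpha> S) x = (\<Prod>i\<in>S. x - \<alpha> ^ i)"
  by (simp add: roots_poly_def poly_prod)

lemma degree_roots_poly: "finite S \<Longrightarrow> degree (roots_poly \<alpha> S) = card S"
  unfolding roots_poly_def by (subst degree_prod_eq_sum_degree) auto

lemma poly_roots_poly_eq_0_iff:
  assumes "prim_root n \<alpha>" "S \<subseteq> {..<n}" "t < n"
  shows "poly (roots_poly \<alpha> S) (\<alpha> ^ t) = 0 \<longleftrightarrow> t \<in> S"
proof -
  have "finite S" using assms(2) finite_subset by blast
  moreover have "\<alpha> ^ t = \<alpha> ^ i \<longleftrightarrow> t = i" if "i \<in> S" for i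
    using prim_root_power_eq_iff[OF assms(1) assms(3)] that assms(2) by blast
  ultimately show ?thesis by (auto simp: poly_roots_poly prod_zero_iff)
qed

lemma roots_poly_dvd_iff:
  assumes "prim_root n \<alpha>" "S \<subseteq> {..<n}"
  shows "roots_poly \<alpha> S dvd f \<longleftrightarrow> (\<forall>i\<in>S. poly f (\<alpha> ^ i) = 0)"
proof
  assume "roots_poly \<alpha> S dvd f"
  then show "\<forall>i\<in>S. poly f (\<alpha> ^ i) = 0"
    using poly_roots_poly_eq_0_iff[OF assms] assms(2) by (auto elim!: dvdE)
next
  have "finite S" using assms(2) finite_subset by blast
  then show "\<forall>i\<in>S. poly f (\<alpha> ^ i) = 0 \<Longrightarrow> roots_poly \<alpha> S dvd f"
    using assms(2)
  proof (induction S arbitrary: f rule: finite_induct)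
    case (insert a S)
    obtain q where q: "f = [:- (\<alpha> ^ a), 1:] * q"
      using insert.prems by (auto simp: poly_eq_0_iff_dvd elim: dvdE)
    have "\<alpha> ^ i \<noteq> \<alpha> ^ a" if "i \<in> S" for i
      using prim_root_power_eq_iff[OF assms(1), of i a] insert that by auto
    then have "\<forall>i\<in>S. poly q (\<alpha> ^ i) = 0" using insert.prems by (auto simp: q)
    then have "roots_poly \<alpha> S dvd q" using insert by blast
    then show ?case
      using insert.hyps by (simp add: roots_poly_def q mult_dvd_mono del: mult_pCons_left)
  qed (simp add: roots_poly_def)
qed

lemma mem_cyclic_code_roots_poly_iff:
  assumes "prim_root n \<alpha>" "S \<subseteq> {..<n}"
  shows "c \<in> cyclic_code n (roots_poly \<alpha> S)
    \<longleftrightarrow> degree c < n \<and> (\<forall>i\<in>S. poly (map_poly of_bit c) (\<alpha> ^ i) = 0)"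
  unfolding cyclic_code_def using roots_poly_dvd_iff[OF assms] by simp

lemma cyclic_code_roots_poly_antimono:
  assumes "prim_root n \<alpha>" "S \<subseteq> T" "T \<subseteq> {..<n}"
  shows "cyclic_code n (roots_poly \<alpha> T) \<subseteq> cyclic_code n (roots_poly \<alpha> S)"
proof
  fix c assume "c \<in> cyclic_code n (roots_poly \<alpha> T)"
  then show "c \<in> cyclic_code n (roots_poly \<alpha> S)"
    using assms by (simp add: mem_cyclic_code_roots_poly_iff subset_iff)
qed

lemma inj_on_double_mod:
  assumes "odd n"
  shows "inj_on (\<lambda>i::nat. 2 * i mod n) {..<n}"
proof (rule inj_onI)
  fix i j assume ij: "i \<in> {..<n}" "j \<in> {..<n}" "2 * i mod n = 2 * j mod n"
  have "coprime 2 n" using assms by simp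
  then have "[i = j] (mod n)" using ij(3) by (metis cong_def cong_mult_lcancel_nat)
  then show "i = j" using ij(1,2) by (simp add: cong_def)
qed

lemma roots_poly_frobenius:
  assumes "(2::'a::field) = 0" "prim_root n \<alpha>" "odd n" "S \<subseteq> {..<n}"
    and closed: "\<And>i. i \<in> S \<Longrightarrow> 2 * i mod n \<in> S"
  shows "map_poly (\<lambda>a. a ^ 2) (roots_poly \<alpha> S) = (roots_poly \<alpha> S :: 'a poly)"
proof -
  have inj: "inj_on (\<lambda>i. 2 * i mod n) S"
    using inj_on_double_mod[OF assms(3)] assms(4) inj_on_subset by blast
  have img: "(\<lambda>i. 2 * i mod n) ` S = S"
    using endo_inj_surj[OF finite_subset[OF assms(4)] _ inj] closed by blast
  have "map_poly (\<lambda>a. a ^ 2) [:- (\<alpha> ^ i), 1:] = [:- (\<alpha> ^ (2 * i mod n)), 1:]" for i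
    by (simp add: map_poly_pCons prim_root_power_mod[OF assms(2)] uminus_eq_self_char2[OF assms(1)]
        power_mult[symmetric] mult.commute)
  then have "map_poly (\<lambda>a. a ^ 2) (roots_poly \<alpha> S) = (\<Prod>i\<in>S. [:- (\<alpha> ^ (2 * i mod n)), 1:])"
    unfolding roots_poly_def
    by (simp add: map_poly_prod_hom power_mult_distrib power2_add_char2[OF assms(1)])
  also have "\<dots> = roots_poly \<alpha> S"
    unfolding roots_poly_def using prod.reindex[OF inj, of "\<lambda>j. [:- (\<alpha> ^ j), 1:]"] img by simp
  finally show ?thesis .
qed

text \<open>Closure under doubling makes the polynomial fixed by the Frobenius map, so its
  coefficients lie in \<open>GF(2)\<close>.\<close>

lemma roots_poly_binary:
  assumes "(2::'a::field) = 0" "prim_root n \<alpha>" "odd n" "S \<subseteq> {..<n}"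
    and "\<And>i. i \<in> S \<Longrightarrow> 2 * i mod n \<in> S"
  obtains g :: "bit poly" where "map_poly of_bit g = (roots_poly \<alpha> S :: 'a poly)"
proof
  let ?G = "roots_poly \<alpha> S :: 'a poly"
  have "coeff ?G k ^ 2 = coeff ?G k" for k
    using arg_cong[OF roots_poly_frobenius[OF assms], of "\<lambda>p. coeff p k"] by (simp add: coeff_map_poly)
  then have "coeff ?G k = 0 \<or> coeff ?G k = 1" for k
    by (metis power2_eq_square mult_cancel_left2)
  then show "map_poly of_bit (map_poly (\<lambda>a. if a = 0 then 0 else 1) ?G) = ?G"
    by (intro poly_eqI) (auto simp: coeff_map_poly)
qed

lemma cyclic_code_roots_poly_psubset:
  fixes \<alpha> :: "'a::field"
  assumes "(2::'a) = 0" "prim_root n \<alpha>" "odd n" "S \<subseteq> T" "T \<subseteq> {..<n}"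
    and "\<And>i. i \<in> S \<Longrightarrow> 2 * i mod n \<in> S" and "t \<in> T" "t \<notin> S"
  shows "cyclic_code n (roots_poly \<alpha> T) \<subset> cyclic_code n (roots_poly \<alpha> S)"
proof -
  have S: "S \<subseteq> {..<n}" using assms(4,5) by blast
  obtain g where g: "map_poly of_bit g = (roots_poly \<alpha> S :: 'a poly)"
    using roots_poly_binary[OF assms(1-3) S assms(6)] by blast
  have "card S < card {..<n}"
    using assms(4,5,7,8) by (intro psubset_card_mono) auto
  moreover have "degree g = degree (roots_poly \<alpha> S)"
    using degree_map_poly_of_bit[where 'a='a, of g] g by simp
  ultimately have "degree g < n"
    using S by (simp add: degree_roots_poly finite_subset)
  then have "g \<in> cyclic_code n (roots_poly \<alpha> S)"
    unfolding cyclic_code_def mem_Collect_eq g by simp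
  moreover have "g \<notin> cyclic_code n (roots_poly \<alpha> T)"
  proof
    assume "g \<in> cyclic_code n (roots_poly \<alpha> T)"
    then have "poly (roots_poly \<alpha> S) (\<alpha> ^ t) = 0"
      using assms(7) unfolding mem_cyclic_code_roots_poly_iff[OF assms(2,5)] g by blast
    then show False using poly_roots_poly_eq_0_iff[OF assms(2) S] assms(5,7,8) by blast
  qed
  ultimately show ?thesis
    using cyclic_code_roots_poly_antimono[OF assms(2,4,5)] by blast
qed

lemma cyclic_shift_binary:
  assumes "(2::'a::field) = 0" "n > 0"
  obtains d :: "bit poly" where "degree d < n"
    and "\<And>\<beta>::'a. \<beta> ^ n = 1 \<Longrightarrow> poly (map_poly of_bit d) \<beta> = \<beta> ^ j * poly (map_poly of_bit g) \<beta>"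
proof
  define X :: "bit poly" where "X = monom 1 n - 1"
  define d where "d = (monom 1 j * g) mod X"
  have "degree X = n"
    unfolding X_def diff_conv_add_uminus using assms(2)
    by (subst degree_add_eq_left) (simp_all add: degree_monom_eq)
  then have "X \<noteq> 0" using assms(2) by auto
  show "degree d < n"
    using degree_mod_less[OF \<open>X \<noteq> 0\<close>, of "monom 1 j * g"] \<open>degree X = n\<close> assms(2)
    by (auto simp: d_def)
  fix \<beta> :: 'a assume "\<beta> ^ n = 1"
  have "d = monom 1 j * g - (monom 1 j * g) div X * X"
    by (simp add: d_def minus_div_mult_eq_mod)
  then have "map_poly of_bit d = (map_poly of_bit (monom 1 j) * map_poly of_bit g
      - map_poly of_bit ((monom 1 j * g) div X) * map_poly of_bit X :: 'a poly)"
    by (simp only: map_poly_of_bit_diff_char2[OF assms(1)] map_poly_of_bit_mult_char2[OF assms(1)])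
  also have "map_poly of_bit X = (monom 1 n - 1 :: 'a poly)"
    unfolding X_def map_poly_of_bit_diff_char2[OF assms(1)] by (simp add: map_poly_monom)
  also have "map_poly of_bit (monom 1 j) = (monom 1 j :: 'a poly)"
    by (simp add: map_poly_monom)
  finally show "poly (map_poly of_bit d) \<beta> = \<beta> ^ j * poly (map_poly of_bit g) \<beta>"
    using \<open>\<beta> ^ n = 1\<close> by (simp add: poly_monom)
qed

section \<open>Duals of cyclic codes via the discrete Fourier transform\<close>

lemma sum_powers_prim_root:
  fixes \<alpha> :: "'a::field"
  assumes "prim_root n \<alpha>" "i < n" "l < n"
  shows "(\<Sum>u<n. (\<alpha> ^ i * inverse (\<alpha> ^ l)) ^ u) = (if i = l then of_nat n else 0)"
proof (cases "i = l")
  case False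
  have "\<alpha> \<noteq> 0" using prim_root_nonzero[OF assms(1)] assms(2) by simp
  then have "\<alpha> ^ i * inverse (\<alpha> ^ l) \<noteq> 1"
    using False prim_root_power_eq_iff[OF assms] by (simp add: field_simps)
  moreover have "(\<alpha> ^ i * inverse (\<alpha> ^ l)) ^ n = 1"
    by (simp add: power_mult_distrib power_inverse prim_root_power_pow_eq_1[OF assms(1)])
  ultimately show ?thesis using False by (simp add: sum_gp_strict)
qed (use prim_root_nonzero[OF assms(1)] assms(2) in simp)

lemma poly_eq_sum_lessThan:
  fixes p :: "'a::comm_semiring_1 poly"
  assumes "degree p < n"
  shows "poly p x = (\<Sum>i<n. coeff p i * x ^ i)"
proof -
  have "poly p x = (\<Sum>i\<le>degree p. coeff p i * x ^ i)" by (rule poly_altdef)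
  also have "\<dots> = (\<Sum>i<n. coeff p i * x ^ i)"
    by (rule sum.mono_neutral_left) (use assms in \<open>auto simp: coeff_eq_0\<close>)
  finally show ?thesis .
qed

lemma inner_product_eq_dft_sum:
  fixes \<alpha> :: "'a::field" and C D :: "'a poly"
  assumes "prim_root n \<alpha>" "of_nat n = (1::'a)" "degree C < n" "degree D < n"
  shows "(\<Sum>i<n. coeff C i * coeff D i) = (\<Sum>u<n. poly C (\<alpha> ^ u) * poly D (inverse (\<alpha> ^ u)))"
proof -
  let ?w = "\<lambda>i l. \<alpha> ^ i * inverse (\<alpha> ^ l)"
  have "poly C (\<alpha> ^ u) * poly D (inverse (\<alpha> ^ u))
      = (\<Sum>i<n. \<Sum>l<n. coeff C i * coeff D l * ?w i l ^ u)" for u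
  proof -
    have "poly C (\<alpha> ^ u) * poly D (inverse (\<alpha> ^ u))
        = (\<Sum>i<n. \<Sum>l<n. coeff C i * (\<alpha> ^ u) ^ i * (coeff D l * inverse (\<alpha> ^ u) ^ l))"
      by (simp add: poly_eq_sum_lessThan[OF assms(3)] poly_eq_sum_lessThan[OF assms(4)] sum_product)
    also have "\<dots> = (\<Sum>i<n. \<Sum>l<n. coeff C i * coeff D l * ?w i l ^ u)"
      by (intro sum.cong refl)
        (simp add: power_mult_distrib power_inverse mult_ac flip: power_mult)
    finally show ?thesis .
  qed
  then have "(\<Sum>u<n. poly C (\<alpha> ^ u) * poly D (inverse (\<alpha> ^ u)))
      = (\<Sum>u<n. \<Sum>i<n. \<Sum>l<n. coeff C i * coeff D l * ?w i l ^ u)"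
    by simp
  also have "\<dots> = (\<Sum>i<n. \<Sum>l<n. \<Sum>u<n. coeff C i * coeff D l * ?w i l ^ u)"
    by (subst sum.swap) (intro sum.cong refl sum.swap)
  also have "\<dots> = (\<Sum>i<n. \<Sum>l<n. coeff C i * coeff D l * (if i = l then 1 else 0))"
    by (intro sum.cong refl)
      (simp add: sum_distrib_left[symmetric] sum_powers_prim_root[OF assms(1)] assms(2))
  also have "\<dots> = (\<Sum>i<n. coeff C i * coeff D i)"
    by (simp add: if_distrib cong: if_cong)
  finally show ?thesis by simp
qed

lemma inverse_dft_eq_0:
  fixes \<alpha> :: "'a::field"
  assumes "prim_root n \<alpha>" "of_nat n = (1::'a)"
    and dft: "\<And>j. j < n \<Longrightarrow> (\<Sum>u<n. F u * inverse (\<alpha> ^ u) ^ j) = 0" and v: "v < n"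
  shows "F v = 0"
proof -
  have "0 = (\<Sum>j<n. (\<alpha> ^ v) ^ j * (\<Sum>u<n. F u * inverse (\<alpha> ^ u) ^ j))"
    using dft by simp
  also have "\<dots> = (\<Sum>j<n. \<Sum>u<n. F u * (\<alpha> ^ v * inverse (\<alpha> ^ u)) ^ j)"
    by (intro sum.cong refl)
      (simp add: sum_distrib_left power_mult_distrib mult.commute mult.left_commute)
  also have "\<dots> = (\<Sum>u<n. \<Sum>j<n. F u * (\<alpha> ^ v * inverse (\<alpha> ^ u)) ^ j)"
    by (rule sum.swap)
  also have "\<dots> = (\<Sum>u<n. F u * (if v = u then 1 else 0))"
    by (intro sum.cong refl)
      (simp add: sum_distrib_left[symmetric] sum_powers_prim_root[OF assms(1) v] assms(2))
  also have "\<dots> = F v" using v by (simp add: if_distrib cong: if_cong)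
  finally show ?thesis by simp
qed

text \<open>The codewords used are the cyclic shifts \<open>x^j g(x) mod (x^n - 1)\<close> of the binary generator \<open>g\<close>.\<close>

lemma dual_cyclic_code_dft_vanishes:
  fixes \<alpha> :: "'a::field"
  assumes "(2::'a) = 0" "prim_root n \<alpha>" "odd n" "Z \<subseteq> {..<n}"
    and "\<And>i. i \<in> Z \<Longrightarrow> 2 * i mod n \<in> Z"
    and c: "c \<in> dual_code n (cyclic_code n (roots_poly \<alpha> Z))" and "j < n"
  shows "(\<Sum>u<n. poly (map_poly of_bit c) (\<alpha> ^ u) * poly (roots_poly \<alpha> Z) (inverse (\<alpha> ^ u))
      * inverse (\<alpha> ^ u) ^ j) = 0"
proof -
  let ?G = "roots_poly \<alpha> Z"
  have n: "n > 0" "of_nat n = (1::'a)" using assms(1,3) of_nat_odd_char2 by (auto intro: odd_pos)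
  obtain g where g: "map_poly of_bit g = ?G"
    using roots_poly_binary[OF assms(1-5)] by blast
  obtain d where d: "degree d < n"
    and ev: "\<And>\<beta>::'a. \<beta> ^ n = 1 \<Longrightarrow> poly (map_poly of_bit d) \<beta> = \<beta> ^ j * poly ?G \<beta>"
    using cyclic_shift_binary[OF assms(1) n(1), of j g] unfolding g by blast
  have "d \<in> cyclic_code n ?G"
    unfolding mem_cyclic_code_roots_poly_iff[OF assms(2,4)]
  proof (intro conjI ballI d)
    fix i assume "i \<in> Z"
    then have "poly ?G (\<alpha> ^ i) = 0"
      using poly_roots_poly_eq_0_iff[OF assms(2,4)] assms(4) by blast
    then show "poly (map_poly of_bit d) (\<alpha> ^ i) = 0"
      unfolding ev[OF prim_root_power_pow_eq_1[OF assms(2)]] by simp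
  qed
  then have "(0::'a) = of_bit (\<Sum>i<n. coeff c i * coeff d i)"
    using c by (simp add: dual_code_def)
  also have "\<dots> = (\<Sum>i<n. coeff (map_poly of_bit c) i * coeff (map_poly of_bit d) i)"
    by (simp only: of_bit_sum_char2[OF assms(1)] of_bit_mult) (simp add: coeff_map_poly)
  also have "\<dots> = (\<Sum>u<n. poly (map_poly of_bit c) (\<alpha> ^ u) * poly (map_poly of_bit d) (inverse (\<alpha> ^ u)))"
    using c d unfolding dual_code_def mem_Collect_eq
    by (intro inner_product_eq_dft_sum[OF assms(2) n(2)]) (simp_all only: degree_map_poly_of_bit)
  also have "\<dots> = (\<Sum>u<n. poly (map_poly of_bit c) (\<alpha> ^ u) * poly ?G (inverse (\<alpha> ^ u))
      * inverse (\<alpha> ^ u) ^ j)"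
  proof (intro sum.cong refl)
    fix u
    have "inverse (\<alpha> ^ u) ^ n = 1"
      by (simp add: power_inverse prim_root_power_pow_eq_1[OF assms(2)])
    then show "poly (map_poly of_bit c) (\<alpha> ^ u) * poly (map_poly of_bit d) (inverse (\<alpha> ^ u))
      = poly (map_poly of_bit c) (\<alpha> ^ u) * poly ?G (inverse (\<alpha> ^ u)) * inverse (\<alpha> ^ u) ^ j"
      by (simp only: ev mult.assoc mult.commute[of "inverse (\<alpha> ^ u) ^ j"])
  qed
  finally show ?thesis by simp
qed

text \<open>\<open>(n - v) mod n\<close> is the exponent of \<open>\<alpha>^-v\<close>, so the last hypothesis says that \<open>Z\<close> and \<open>-Z\<close>
  are disjoint.\<close>

lemma dual_cyclic_code_subset:
  fixes \<alpha> :: "'a::field"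
  assumes "(2::'a) = 0" "prim_root n \<alpha>" "odd n" "Z \<subseteq> {..<n}"
    and "\<And>i. i \<in> Z \<Longrightarrow> 2 * i mod n \<in> Z"
    and neg: "\<And>v. v \<in> Z \<Longrightarrow> (n - v) mod n \<notin> Z"
  shows "dual_code n (cyclic_code n (roots_poly \<alpha> Z)) \<subseteq> cyclic_code n (roots_poly \<alpha> Z)"
proof
  fix c assume c: "c \<in> dual_code n (cyclic_code n (roots_poly \<alpha> Z))"
  have "poly (map_poly of_bit c) (\<alpha> ^ v) = 0" if v: "v \<in> Z" for v
  proof -
    have "v < n" using v assms(4) by blast
    have n: "of_nat n = (1::'a)" using assms(1,3) of_nat_odd_char2 by blast
    have "poly (map_poly of_bit c) (\<alpha> ^ v) * poly (roots_poly \<alpha> Z) (inverse (\<alpha> ^ v)) = 0"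
      by (rule inverse_dft_eq_0[OF assms(2) n
            dual_cyclic_code_dft_vanishes[OF assms(1-5) c] \<open>v < n\<close>])
    moreover have "poly (roots_poly \<alpha> Z) (inverse (\<alpha> ^ v)) \<noteq> 0"
      using neg[OF v] \<open>v < n\<close> poly_roots_poly_eq_0_iff[OF assms(2,4), of "(n - v) mod n"]
      by (simp add: prim_root_inverse_power[OF assms(2)])
    ultimately show ?thesis by simp
  qed
  then show "c \<in> cyclic_code n (roots_poly \<alpha> Z)"
    using c by (simp add: mem_cyclic_code_roots_poly_iff[OF assms(2,4)] dual_code_def)
qed

section \<open>Binary weights and cyclotomic cosets\<close>

declare w2.simps [simp del]

lemma w2_rec: "w2 s = s mod 2 + w2 (s div 2)"
  by (cases "s = 0") (simp_all add: w2.simps[of s] w2.simps[of 0])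

lemma w2_0 [simp]: "w2 0 = 0"
  by (simp add: w2.simps)

lemma w2_double [simp]: "w2 (2 * s) = w2 s"
  using w2_rec[of "2 * s"] by simp

lemma w2_Suc_double [simp]: "w2 (Suc (2 * s)) = Suc (w2 s)"
  using w2_rec[of "Suc (2 * s)"] by simp

lemma w2_pos: "s > 0 \<Longrightarrow> w2 s > 0"
proof (induction s rule: less_induct)
  case (less s)
  then show ?case using less.IH[of "s div 2"] w2_rec[of s] by (cases "s mod 2 = 0") auto
qed

lemma w2_le: "s < 2 ^ k \<Longrightarrow> w2 s \<le> k"
proof (induction k arbitrary: s)
  case (Suc k)
  then have "s div 2 < 2 ^ k" by auto
  then show ?case using Suc.IH[of "s div 2"] w2_rec[of s] by auto
qed simp

lemma w2_add_pow2: "a < 2 ^ k \<Longrightarrow> w2 (a + 2 ^ k) = Suc (w2 a)"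
proof (induction k arbitrary: a)
  case 0 then show ?case using w2_rec[of 1] by simp
next
  case (Suc k)
  have "(a + 2 ^ Suc k) div 2 = a div 2 + 2 ^ k" "(a + 2 ^ Suc k) mod 2 = a mod 2"
    by simp_all
  then have "w2 (a + 2 ^ Suc k) = a mod 2 + w2 (a div 2 + 2 ^ k)"
    using w2_rec[of "a + 2 ^ Suc k"] by (simp only:)
  also have "w2 (a div 2 + 2 ^ k) = Suc (w2 (a div 2))"
    using Suc by auto
  finally show ?case using w2_rec[of a] by simp
qed

lemma w2_complement: "s < 2 ^ k \<Longrightarrow> w2 (2 ^ k - 1 - s) = k - w2 s"
proof (induction k arbitrary: s)
  case (Suc k)
  have q: "s div 2 < 2 ^ k" using Suc.prems by auto
  have "s = 2 * (s div 2) + s mod 2" "s mod 2 < 2" by simp_all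
  then have "s div 2 < P \<Longrightarrow> 2 * P - 1 - s = 2 * (P - 1 - s div 2) + (1 - s mod 2)" for P
    by linarith
  then have "2 ^ Suc k - 1 - s = 2 * (2 ^ k - 1 - s div 2) + (1 - s mod 2)"
    using q by simp
  then have "w2 (2 ^ Suc k - 1 - s) = (1 - s mod 2) + (k - w2 (s div 2))"
    using Suc.IH[OF q] by (cases "s mod 2 = 0") simp_all
  then show ?case using w2_le[OF q] w2_rec[of s] by simp
qed simp

lemma w2_less: "s < 2 ^ k - 1 \<Longrightarrow> w2 s < k"
  using w2_complement[of s k] w2_pos[of "2 ^ k - 1 - s"] by simp

text \<open>Doubling modulo \<open>2^m - 1\<close> rotates the \<open>m\<close>-bit binary expansion.\<close>

lemma w2_double_mod_mersenne:
  assumes "s < 2 ^ m - 1"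
  shows "w2 (2 * s mod (2 ^ m - 1)) = w2 s"
proof (cases "2 * s < 2 ^ m - 1")
  case False
  have "m > 0" using assms by (cases m) auto
  then have pm: "2 ^ m = 2 * (2::nat) ^ (m - 1)" by (cases m) simp_all
  define a where "a = s - 2 ^ (m - 1)"
  have s: "s = a + 2 ^ (m - 1)" and a: "a < 2 ^ (m - 1)"
    using False assms pm by (simp_all add: a_def)
  have e: "2 * s = Suc (2 * a) + (2 ^ m - 1)" and l: "Suc (2 * a) < 2 ^ m - 1"
    using s a pm assms by linarith+
  have "2 * s mod (2 ^ m - 1) = Suc (2 * a)"
    unfolding e mod_add_self2 using l by (rule mod_less)
  then show ?thesis using w2_add_pow2[OF a] s by simp
qed simp

lemma cyc_coset_iff: "t \<in> cyc_coset n s \<longleftrightarrow> (\<exists>i. t = s * 2 ^ i mod n)"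
  by (auto simp: cyc_coset_def)

lemma double_mod_pow2_mod: "2 * (s * 2 ^ i mod n) mod n = s * 2 ^ Suc i mod (n::nat)"
  by (simp add: mod_mult_right_eq mult.left_commute)

lemma double_mod_in_cyc_coset: "t \<in> cyc_coset n s \<Longrightarrow> 2 * t mod n \<in> cyc_coset n s"
  unfolding cyc_coset_iff by (auto simp only: double_mod_pow2_mod)

lemma w2_cyc_coset:
  assumes "s < 2 ^ m - 1" "t \<in> cyc_coset (2 ^ m - 1) s"
  shows "w2 t = w2 s"
proof -
  obtain i where "t = s * 2 ^ i mod (2 ^ m - 1)" using assms(2) by (auto simp: cyc_coset_iff)
  moreover have "w2 (s * 2 ^ i mod (2 ^ m - 1)) = w2 s"
  proof (induction i)
    case (Suc i)
    have "s * 2 ^ Suc i mod (2 ^ m - 1) = 2 * (s * 2 ^ i mod (2 ^ m - 1)) mod (2 ^ m - 1)"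
      by (simp only: double_mod_pow2_mod)
    then show ?case
      using w2_double_mod_mersenne[of "s * 2 ^ i mod (2 ^ m - 1)" m] assms(1) Suc by simp
  qed (use assms(1) in simp)
  ultimately show ?thesis by simp
qed

lemma cyc_coset_subset: "s < n \<Longrightarrow> cyc_coset n s \<subseteq> {..<n}"
  by (auto simp: cyc_coset_def)

lemma finite_cyc_coset: "s < n \<Longrightarrow> finite (cyc_coset n s)"
  using cyc_coset_subset finite_subset by blast

lemma self_in_cyc_coset: "s < n \<Longrightarrow> s \<in> cyc_coset n s"
  by (auto simp: cyc_coset_def intro!: exI[of _ 0])

lemma cyc_coset_trans: "t \<in> cyc_coset n s \<Longrightarrow> cyc_coset n t \<subseteq> cyc_coset n s"
proof
  fix x assume "t \<in> cyc_coset n s" "x \<in> cyc_coset n t"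
  then obtain i j where "t = s * 2 ^ i mod n" "x = t * 2 ^ j mod n"
    by (auto simp: cyc_coset_iff)
  then have "x = s * 2 ^ (i + j) mod n"
    by (simp add: mod_mult_left_eq power_add mult.assoc)
  then show "x \<in> cyc_coset n s" by (auto simp: cyc_coset_iff)
qed

lemma pow2_mod_mersenne:
  assumes "m \<ge> 2"
  shows "2 ^ (m * q) mod (2 ^ m - 1) = (1::nat)"
proof -
  have "(2::nat) ^ 2 \<le> 2 ^ m" using assms by (intro power_increasing) auto
  then have e: "(2::nat) ^ m = 1 + (2 ^ m - 1)" and l: "1 < (2::nat) ^ m - 1" by simp_all
  have "(2::nat) ^ m mod (2 ^ m - 1) = 1"
    by (subst e, unfold mod_add_self2) (rule mod_less[OF l])
  then show ?thesis using l by (simp add: power_mult power_mod[of "2 ^ m", symmetric])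
qed

lemma cyc_coset_sym:
  assumes "m \<ge> 2" "s < 2 ^ m - 1" "t \<in> cyc_coset (2 ^ m - 1) s"
  shows "s \<in> cyc_coset (2 ^ m - 1) t"
proof -
  obtain i where t: "t = s * 2 ^ i mod (2 ^ m - 1)" using assms(3) by (auto simp: cyc_coset_iff)
  have "i + (m - 1) * i = m * i" using assms(1) by (cases m) simp_all
  then have "t * 2 ^ ((m - 1) * i) mod (2 ^ m - 1) = s * (2 ^ (m * i) mod (2 ^ m - 1)) mod (2 ^ m - 1)"
    unfolding t by (simp add: mod_mult_left_eq mod_mult_right_eq mult.assoc flip: power_add)
  also have "\<dots> = s" using pow2_mod_mersenne[OF assms(1)] assms(2) by simp
  finally show ?thesis by (auto simp: cyc_coset_iff)
qed

lemma cyc_coset_eq: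
  assumes "m \<ge> 2" "s < 2 ^ m - 1" "t \<in> cyc_coset (2 ^ m - 1) s"
  shows "cyc_coset (2 ^ m - 1) t = cyc_coset (2 ^ m - 1) s"
  using cyc_coset_trans[OF assms(3)] cyc_coset_trans[OF cyc_coset_sym[OF assms]] by blast

lemma cyc_cosets_of_leaders_disjoint:
  assumes "m \<ge> 2" "s \<in> coset_leaders (2 ^ m - 1)" "s' \<in> coset_leaders (2 ^ m - 1)" "s \<noteq> s'"
  shows "cyc_coset (2 ^ m - 1) s \<inter> cyc_coset (2 ^ m - 1) s' = {}"
proof (rule ccontr)
  assume "cyc_coset (2 ^ m - 1) s \<inter> cyc_coset (2 ^ m - 1) s' \<noteq> {}"
  then obtain x where "x \<in> cyc_coset (2 ^ m - 1) s" "x \<in> cyc_coset (2 ^ m - 1) s'" by blast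
  moreover have "s < 2 ^ m - 1" "s' < 2 ^ m - 1"
    using assms(2,3) by (auto simp: coset_leaders_def)
  ultimately have "cyc_coset (2 ^ m - 1) s = cyc_coset (2 ^ m - 1) s'"
    using cyc_coset_eq[OF assms(1)] by metis
  then show False
    using assms(2-4) self_in_cyc_coset[of s "2 ^ m - 1"] self_in_cyc_coset[of s' "2 ^ m - 1"]
    by (force simp: coset_leaders_def)
qed

section \<open>The defining sets of the Reed--Muller and BCH codes\<close>

definition low_weight :: "nat \<Rightarrow> nat \<Rightarrow> nat set" where
  "low_weight m K = {t. t < 2 ^ m - 1 \<and> 1 \<le> w2 t \<and> w2 t \<le> K}"

lemma Union_leader_cosets_eq_low_weight:
  assumes "m \<ge> 2"
  shows "(\<Union>s\<in>{s \<in> coset_leaders (2 ^ m - 1). 1 \<le> w2 s \<and> w2 s \<le> K}. cyc_coset (2 ^ m - 1) s)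
       = low_weight m K"
proof (intro equalityI subsetI)
  fix t assume "t \<in> (\<Union>s\<in>{s \<in> coset_leaders (2 ^ m - 1). 1 \<le> w2 s \<and> w2 s \<le> K}. cyc_coset (2 ^ m - 1) s)"
  then obtain s where s: "s \<in> coset_leaders (2 ^ m - 1)" "1 \<le> w2 s" "w2 s \<le> K"
      "t \<in> cyc_coset (2 ^ m - 1) s" by blast
  have "s < 2 ^ m - 1" using s(1) by (simp add: coset_leaders_def)
  moreover have "t < 2 ^ m - 1"
    using s(4) cyc_coset_subset[OF \<open>s < 2 ^ m - 1\<close>] by blast
  ultimately show "t \<in> low_weight m K"
    using s w2_cyc_coset by (auto simp: low_weight_def)
next
  fix t assume t: "t \<in> low_weight m K"
  then have tn: "t < 2 ^ m - 1" by (simp add: low_weight_def)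
  have fin: "finite (cyc_coset (2 ^ m - 1) t)" using finite_cyc_coset[OF tn] .
  define s where "s = Min (cyc_coset (2 ^ m - 1) t)"
  have "s \<in> cyc_coset (2 ^ m - 1) t"
    using Min_in[OF fin] self_in_cyc_coset[OF tn] s_def by blast
  then have eq: "cyc_coset (2 ^ m - 1) s = cyc_coset (2 ^ m - 1) t" and "w2 s = w2 t"
    using cyc_coset_eq[OF assms tn] w2_cyc_coset[OF tn] by auto
  moreover have "s < 2 ^ m - 1"
    using \<open>s \<in> cyc_coset (2 ^ m - 1) t\<close> cyc_coset_subset[OF tn] by blast
  ultimately have "s \<in> {s \<in> coset_leaders (2 ^ m - 1). 1 \<le> w2 s \<and> w2 s \<le> K}"
    using fin t by (simp add: coset_leaders_def s_def low_weight_def)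
  then show "t \<in> (\<Union>s\<in>{s \<in> coset_leaders (2 ^ m - 1). 1 \<le> w2 s \<and> w2 s \<le> K}. cyc_coset (2 ^ m - 1) s)"
    using eq self_in_cyc_coset[OF tn] by blast
qed

lemma punct_RM_eq_roots_poly:
  assumes "m \<ge> 2"
  shows "punct_RM r m \<alpha> = cyclic_code (2 ^ m - 1) (roots_poly \<alpha> (low_weight m (m - r - 1)))"
proof -
  let ?L = "{s \<in> coset_leaders (2 ^ m - 1). 1 \<le> w2 s \<and> w2 s \<le> m - r - 1}"
  have "finite ?L" by (rule finite_subset[of _ "{..<2 ^ m - 1}"]) (auto simp: coset_leaders_def)
  moreover have "\<forall>s\<in>?L. finite (cyc_coset (2 ^ m - 1) s)"
    by (auto simp: coset_leaders_def intro: finite_cyc_coset)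
  moreover have "\<forall>s\<in>?L. \<forall>s'\<in>?L. s \<noteq> s' \<longrightarrow> cyc_coset (2 ^ m - 1) s \<inter> cyc_coset (2 ^ m - 1) s' = {}"
    using cyc_cosets_of_leaders_disjoint[OF assms] by blast
  ultimately have "roots_poly \<alpha> (\<Union>s\<in>?L. cyc_coset (2 ^ m - 1) s)
      = (\<Prod>s\<in>?L. roots_poly \<alpha> (cyc_coset (2 ^ m - 1) s))"
    unfolding roots_poly_def by (rule prod.UNION_disjoint)
  then show ?thesis
    unfolding Union_leader_cosets_eq_low_weight[OF assms] punct_RM_def min_poly_def roots_poly_def
    by simp
qed

lemma double_mod_in_low_weight:
  "t \<in> low_weight m K \<Longrightarrow> 2 * t mod (2 ^ m - 1) \<in> low_weight m K"
  using w2_double_mod_mersenne[of t m] by (auto simp: low_weight_def)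

lemma complement_notin_low_weight:
  assumes "2 * K < m" "v \<in> low_weight m K"
  shows "(2 ^ m - 1 - v) mod (2 ^ m - 1) \<notin> low_weight m K"
proof -
  have v: "v < 2 ^ m - 1" "1 \<le> w2 v" "w2 v \<le> K" using assms(2) by (auto simp: low_weight_def)
  then have "v \<noteq> 0" by (intro notI) simp
  then have "(2 ^ m - 1 - v) mod (2 ^ m - 1) = 2 ^ m - 1 - v" using v(1) by simp
  moreover have "w2 (2 ^ m - 1 - v) = m - w2 v" using v(1) by (intro w2_complement) simp
  then have "K < w2 (2 ^ m - 1 - v)" using assms(1) v(3) by linarith
  ultimately show ?thesis by (simp add: low_weight_def)
qed

definition bch_zeros :: "nat \<Rightarrow> nat \<Rightarrow> nat set" where
  "bch_zeros n d = (\<Union>j\<in>{0..d - 2}. cyc_coset n (1 + j))"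

lemma bch_code_eq_roots_poly: "bch_code n d \<alpha> = cyclic_code n (roots_poly \<alpha> (bch_zeros n d))"
  by (simp add: bch_code_def bch_zeros_def roots_poly_def)

lemma double_mod_in_bch_zeros: "t \<in> bch_zeros n d \<Longrightarrow> 2 * t mod n \<in> bch_zeros n d"
  unfolding bch_zeros_def using double_mod_in_cyc_coset by blast

lemma bch_zeros_subset_low_weight:
  assumes "2 \<le> k" "k \<le> m"
  shows "bch_zeros (2 ^ m - 1) (2 ^ k - 1) \<subseteq> low_weight m (k - 1)"
proof
  fix t assume "t \<in> bch_zeros (2 ^ m - 1) (2 ^ k - 1)"
  then obtain j where j: "j \<le> 2 ^ k - 1 - 2" "t \<in> cyc_coset (2 ^ m - 1) (1 + j)"
    unfolding bch_zeros_def by auto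
  have "(4::nat) \<le> 2 ^ k" "(2::nat) ^ k \<le> 2 ^ m"
    using power_increasing[of 2 k "2::nat"] power_increasing[of k m "2::nat"] assms by simp_all
  then have s: "1 + j < 2 ^ k - 1" "1 + j < 2 ^ m - 1" using j(1) by linarith+
  then have "w2 t = w2 (1 + j)" using w2_cyc_coset j(2) by blast
  moreover have "t < 2 ^ m - 1" using cyc_coset_subset[OF s(2)] j(2) by blast
  ultimately show "t \<in> low_weight m (k - 1)"
    using w2_less[OF s(1)] w2_pos[of "1 + j"] by (simp add: low_weight_def)
qed

lemma pow2_mult_mod_mersenne_reduce:
  assumes "m \<ge> 2"
  shows "s * 2 ^ i mod (2 ^ m - 1) = s * 2 ^ (i mod m) mod (2 ^ m - 1::nat)"
proof -
  have "(2::nat) ^ i = 2 ^ (m * (i div m) + i mod m)" by simp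
  then have "s * 2 ^ i = s * 2 ^ (i mod m) * 2 ^ (m * (i div m))"
    by (simp only: power_add mult_ac)
  then have "s * 2 ^ i mod (2 ^ m - 1)
      = s * 2 ^ (i mod m) * (2 ^ (m * (i div m)) mod (2 ^ m - 1)) mod (2 ^ m - 1)"
    by (simp only: mod_mult_right_eq)
  then show ?thesis using pow2_mod_mersenne[OF assms] by simp
qed

lemma pow2_add_pow2_less_mersenne:
  assumes "b < a" "a < m" "3 \<le> m"
  shows "2 ^ a + 2 ^ b < (2 ^ m - 1 :: nat)"
proof -
  have "2 * 2 ^ b \<le> (2::nat) ^ a" "2 * 2 ^ a \<le> (2::nat) ^ m" "(8::nat) \<le> 2 ^ m"
    using power_increasing[of "Suc b" a "2::nat"] power_increasing[of "Suc a" m "2::nat"]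
      power_increasing[of 3 m "2::nat"] assms by simp_all
  then show ?thesis by linarith
qed

text \<open>The two ones of a rotation of \<open>1 + 2^k\<close> are at cyclic distance \<open>k\<close>; as \<open>2k < m\<close>, the higher
  one sits at position at least \<open>k\<close>.\<close>

lemma pow2_plus_1_rotation_ge:
  assumes "1 \<le> k" "2 * k < m" "j < m"
  shows "2 ^ k \<le> (1 + 2 ^ k) * 2 ^ j mod (2 ^ m - 1::nat)"
proof (cases "k + j < m")
  case True
  have "(1 + 2 ^ k) * 2 ^ j = (2::nat) ^ (k + j) + 2 ^ j" by (simp add: power_add algebra_simps)
  moreover have "(2::nat) ^ (k + j) + 2 ^ j < 2 ^ m - 1"
    using True assms by (intro pow2_add_pow2_less_mersenne) auto
  ultimately have "(1 + 2 ^ k) * 2 ^ j mod (2 ^ m - 1) = (2::nat) ^ (k + j) + 2 ^ j" by simp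
  moreover have "(2::nat) ^ k \<le> 2 ^ (k + j)" by (intro power_increasing) auto
  ultimately show ?thesis by linarith
next
  case False
  define e where "e = k + j - m"
  have "(1 + 2 ^ k) * 2 ^ j = (2::nat) ^ j + 2 ^ (k + j)" by (simp add: power_add algebra_simps)
  also have "(2::nat) ^ (k + j) = 2 ^ m * 2 ^ e" using False by (simp add: e_def flip: power_add)
  also have "(2::nat) ^ m * 2 ^ e = (2 ^ m - 1) * 2 ^ e + 2 ^ e" by (simp add: algebra_simps)
  finally have eq: "(1 + 2 ^ k) * 2 ^ j = (2::nat) ^ j + 2 ^ e + (2 ^ m - 1) * 2 ^ e" by simp
  have "(2::nat) ^ j + 2 ^ e < 2 ^ m - 1"
    using False assms by (intro pow2_add_pow2_less_mersenne) (auto simp: e_def)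
  then have "(1 + 2 ^ k) * 2 ^ j mod (2 ^ m - 1) = (2::nat) ^ j + 2 ^ e"
    unfolding eq by simp
  moreover have "(2::nat) ^ k \<le> 2 ^ j" using False assms by (intro power_increasing) auto
  ultimately show ?thesis by linarith
qed

lemma pow2_plus_1_notin_bch_zeros:
  assumes "k \<ge> 2" "2 * k < m"
  shows "1 + 2 ^ k \<notin> bch_zeros (2 ^ m - 1) (2 ^ k - 1)"
proof
  assume "1 + 2 ^ k \<in> bch_zeros (2 ^ m - 1) (2 ^ k - 1)"
  then obtain j where j: "j \<le> 2 ^ k - 1 - 2" "1 + 2 ^ k \<in> cyc_coset (2 ^ m - 1) (1 + j)"
    unfolding bch_zeros_def by auto
  have m: "m \<ge> 2" using assms by linarith
  have "(4::nat) \<le> 2 ^ k" "(2::nat) ^ k < 2 ^ m"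
    using power_increasing[of 2 k "2::nat"] power_strict_increasing[of k m "2::nat"] assms by simp_all
  then have "1 + j < 2 ^ m - 1" using j(1) by linarith
  then have "1 + j \<in> cyc_coset (2 ^ m - 1) (1 + 2 ^ k)" using cyc_coset_sym[OF m _ j(2)] by blast
  then obtain i where "1 + j = (1 + 2 ^ k) * 2 ^ i mod (2 ^ m - 1)"
    unfolding cyc_coset_iff by blast
  then have "1 + j = (1 + 2 ^ k) * 2 ^ (i mod m) mod (2 ^ m - 1)"
    using pow2_mult_mod_mersenne_reduce[OF m, of "1 + 2 ^ k" i] by (rule trans)
  then have "2 ^ k \<le> 1 + j" using pow2_plus_1_rotation_ge[of k m "i mod m"] assms m by simp
  then show False using j(1) \<open>4 \<le> 2 ^ k\<close> by linarith
qed

lemma pow2_plus_1_in_low_weight: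
  assumes "k \<ge> 3" "2 * k < m"
  shows "1 + 2 ^ k \<in> low_weight m (k - 1)"
proof -
  have "(8::nat) \<le> 2 ^ k" "(2::nat) ^ Suc k \<le> 2 ^ m"
    using power_increasing[of 3 k "2::nat"] power_increasing[of "Suc k" m "2::nat"] assms by simp_all
  then have "1 + 2 ^ k < (2 ^ m - 1::nat)" by simp
  moreover have "w2 (1 + 2 ^ k) = 2"
    using w2_add_pow2[of 1 k] \<open>8 \<le> 2 ^ k\<close> w2_rec[of 1] by simp
  ultimately show ?thesis using assms(1) by (simp add: low_weight_def)
qed

theorem lemma3:
  fixes m r :: nat and \<alpha> :: "'a::{field,finite}"
  assumes "card (UNIV :: 'a set) = 2 ^ m"
    and "prim_root (2 ^ m - 1) \<alpha>"
    and "m \<ge> 7"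
    and "\<lceil>real m / 2\<rceil> < int r" and "int r < int m - 2"
  shows "dual_code (2^m - 1) (punct_RM r m \<alpha>) \<subseteq> punct_RM r m \<alpha>
       \<and> punct_RM r m \<alpha> \<subset> bch_code (2^m - 1) (2^(m - r) - 1) \<alpha>"
proof -
  define k where "k = m - r"
  have two: "(2::'a) = 0" using two_eq_zero_if_card_pow2[OF assms(1)] assms(3) by simp
  have "real m / 2 < real r" using le_of_int_ceiling[of "real m / 2"] assms(4) by linarith
  then have k: "3 \<le> k" "2 * k < m" "2 * (m - r - 1) < m" using assms(5) by (simp_all add: k_def)
  have "odd (2 ^ m - 1 :: nat)" using assms(3) by (simp add: odd_pos)
  let ?W = "low_weight m (m - r - 1)" and ?Z = "bch_zeros (2 ^ m - 1) (2 ^ k - 1)"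
  have W: "?W \<subseteq> {..<2 ^ m - 1}" by (auto simp: low_weight_def)
  have ZW: "?Z \<subseteq> ?W" using bch_zeros_subset_low_weight[of k m] k by (simp add: k_def)
  have "1 + 2 ^ k \<in> ?W" using pow2_plus_1_in_low_weight[OF k(1,2)] by (simp add: k_def)
  moreover have "1 + 2 ^ k \<notin> ?Z" using pow2_plus_1_notin_bch_zeros[of k m] k by simp
  ultimately have "cyclic_code (2 ^ m - 1) (roots_poly \<alpha> ?W) \<subset> cyclic_code (2 ^ m - 1) (roots_poly \<alpha> ?Z)"
    by (intro cyclic_code_roots_poly_psubset[OF two assms(2) \<open>odd _\<close> ZW W double_mod_in_bch_zeros])
  moreover have "dual_code (2 ^ m - 1) (cyclic_code (2 ^ m - 1) (roots_poly \<alpha> ?W))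
      \<subseteq> cyclic_code (2 ^ m - 1) (roots_poly \<alpha> ?W)"
    using k(3) by (intro dual_cyclic_code_subset[OF two assms(2) \<open>odd _\<close> W]
        double_mod_in_low_weight complement_notin_low_weight)
  ultimately show ?thesis
    using assms(3) by (simp add: punct_RM_eq_roots_poly bch_code_eq_roots_poly k_def)
qed

end
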